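(* (1) For every $r\in\mathbb N$, the category $\mathcal C_r$ is a full subcategory of $\mathcal C^{pol}\cap\mathcal C^{int}$ (each object of $\mathcal C_r$ being regarded as a $\mathbf U(\infty)$-module via $\zeta_r$). (2) For each $r\in\mathbb N$ there is a surjective algebra homomorphism $\mathbf U(\infty,r+1)\to\mathbf U(\infty,r)$ sending $\zeta_{r+1}(E_i),\zeta_{r+1}(F_i),\zeta_{r+1}(K_i)$ to $\zeta_r(E_i),\zeta_r(F_i),\zeta_r(K_i)$ respectively, for all $i\in\mathbb Z$. Hence $\mathcal C_r$ is a full subcategory of $\mathcal C_{r+1}$.
   Context: $v$ indeterminate. $\mathbf U(\infty)$ is the $\mathbb Q(v)$-algebra with generators $E_i,F_i,K_i,K_i^{-1}$ ($i\in\mathbb Z$) and relations: $K_iK_j=K_jK_i$, $K_iK_i^{-1}=1$; $K_iE_j=v^{\delta_{i,j}-\delta_{i,j+1}}E_jK_i$; $K_iF_j=v^{\delta_{i,j+1}-\delta_{i,j}}F_jK_i$; $E_iE_j=E_jE_i$, $F_iF_j=F_jF_i$ if $|i-j|>1$; $E_iF_j-F_jE_i=\delta_{i,j}\frac{\widetilde K_i-\widetilde K_i^{-1}}{v-v^{-1}}$, $\widetilde K_i=K_iK_{i+1}^{-1}$; $E_i^2E_j-(v+v^{-1})E_iE_jE_i+E_jE_i^2=0$ and likewise for $F$ if $|i-j|=1$; coproduct $\Delta(E_i)=E_i\otimes\widetilde K_i+1\otimes E_i$, $\Delta(F_i)=F_i\otimes1+\widetilde K_i^{-1}\otimes F_i$,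 $\Delta(K_j)=K_j\otimes K_j$. ${\bf\Omega}_\infty$ has basis $\{\omega_i\}_{i\in\mathbb Z}$ with $K_a\omega_b=v^{\delta_{a,b}}\omega_b$, $E_a\omega_b=\delta_{a+1,b}\omega_a$, $F_a\omega_b=\delta_{a,b}\omega_{a+1}$; ${\bf\Omega}_\infty^{\otimes r}$ is a $\mathbf U(\infty)$-module via $\Delta$. The Hecke algebra ${\boldsymbol{\mathcal H}}$ of $\mathfrak S_r$ over $\mathbb Q(v)$ (basis $\mathcal T_w$ with $\mathcal T_s\mathcal T_w=\mathcal T_{sw}$ if $\ell(sw)>\ell(w)$, else $(v-v^{-1})\mathcal T_w+\mathcal T_{sw}$) acts on the right by $(\omega_{i_1}\cdots\omega_{i_r})\mathcal T_{(j,j+1)}=\omega_{i_1}\cdots\omega_{i_{j+1}}\omega_{i_j}\cdots\omega_{i_r}$ if $i_j<i_{j+1}$; $=v\,\omega_{i_1}\cdots\omega_{i_r}$ if $i_j=i_{j+1}$; $=(v-v^{-1})\omega_{i_1}\cdots\omega_{i_r}+\omega_{i_1}\cdots\omega_{i_{j+1}}\omega_{i_j}\cdots\omega_{i_r}$ if $i_j>i_{j+1}$. ${\boldsymbol{\mathcal S}}(\infty,r)=\operatorname{End}_{\boldsymbol{\mathcal H}}({\bf\Omega}_\infty^{\otimes r})$; the commuting actions give $\zeta_r:\mathbf U(\infty)\to{\boldsymbol{\mathcal S}}(\infty,r)$, and $\mathbf U(\infty,r)=\zeta_r(\mathbf U(\infty))$. For a $\mathbf U(\infty)$-module $M$ and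 an integer sequence $\lambda=(\lambda_i)_{i\in\mathbb Z}$, $M_\lambda=\{x:K_ix=v^{\lambda_i}x\ \forall i\}$; $M$ is a weight module if $M=\bigoplus_\lambda M_\lambda$ (over all integer sequences). $\mathcal C^{pol}$: weight modules all of whose weights $\lambda$ (with $M_\lambda\ne0$) are finitely supported with nonnegative entries. $\mathcal C^{int}$: weight modules such that for all $x\in M$ and $i$, $E_i^nx=F_i^nx=0$ for $n\gg0$. $\mathcal C_r$: the category of $\mathbf U(\infty,r)$-modules which, regarded as $\mathbf U(\infty)$-modules via $\zeta_r$, are weight modules (a full subcategory of $\mathbf U(\infty,r)$-modules); via the homomorphism in (2), $\mathbf U(\infty,r)$-modules are $\mathbf U(\infty,r+1)$-modules. *)

theory Defs
  imports Main "HOL-Computational_Algebra.Polynomial" "HOL-Computational_Algebra.Fraction_Field"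
begin

type_synonym K = "rat poly fract"
(* a vector of Omega^(tensor r) is a finitely supported coefficient function on
   words w = (i_1,...,i_r) (lists of integers of length r); omega_w is the basis vector *)
type_synonym tvec = "int list \<Rightarrow> K"
type_synonym top = "tvec \<Rightarrow> tvec"

definition vq :: K where "vq = Fract [:0, 1:] 1"

definition Tsp :: "nat \<Rightarrow> tvec set" where
  "Tsp r = {x. finite {w. x w \<noteq> 0} \<and> (\<forall>w. x w \<noteq> 0 \<longrightarrow> length w = r)}"

definition lin_ext :: "(int list \<Rightarrow> tvec) \<Rightarrow> top" where
  "lin_ext f x = (\<lambda>u. \<Sum>w\<in>{w. x w \<noteq> 0}. x w * f w u)"

(* operators on Omega^(tensor r), represented canonically: zero outside Tsp r *)
definition restr :: "nat \<Rightarrow> top \<Rightarrow> top" where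
  "restr r A = (\<lambda>x. if x \<in> Tsp r then A x else (\<lambda>_. 0))"

(* exponent of K~_a = K_a K_{a+1}^{-1} on omega_b *)
definition dK :: "int \<Rightarrow> int \<Rightarrow> int" where
  "dK a b = (if b = a then 1 else 0) - (if b = a + 1 then 1 else 0)"

(* images of basis vectors under the iterated coproduct:
   Delta^(r)(E_a) = sum_k 1^(k-1) (x) E_a (x) K~_a^(r-k)
   Delta^(r)(F_a) = sum_k K~_a^{-1 (k-1)} (x) F_a (x) 1^(r-k)
   Delta^(r)(K_a) = K_a^(r) *)
definition imgE :: "int \<Rightarrow> int list \<Rightarrow> tvec" where
  "imgE a w u = (\<Sum>k<length w. if w ! k = a + 1 \<and> u = w[k := a]
       then vq powi (\<Sum>j\<in>{k<..<length w}. dK a (w ! j)) else 0)"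

definition imgF :: "int \<Rightarrow> int list \<Rightarrow> tvec" where
  "imgF a w u = (\<Sum>k<length w. if w ! k = a \<and> u = w[k := a + 1]
       then vq powi (- (\<Sum>j<k. dK a (w ! j))) else 0)"

definition imgK :: "int \<Rightarrow> int list \<Rightarrow> tvec" where
  "imgK a w u = (if u = w then vq powi int (length (filter (\<lambda>b. b = a) w)) else 0)"

definition imgKinv :: "int \<Rightarrow> int list \<Rightarrow> tvec" where
  "imgKinv a w u = (if u = w then vq powi (- int (length (filter (\<lambda>b. b = a) w))) else 0)"

definition zE :: "nat \<Rightarrow> int \<Rightarrow> top" where "zE r a = restr r (lin_ext (imgE a))"
definition zF :: "nat \<Rightarrow> int \<Rightarrow> top" where "zF r a = restr r (lin_ext (imgF a))"
definition zK :: "nat \<Rightarrow> int \<Rightarrow> top" where "zK r a = restr r (lin_ext (imgK a))"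
definition zKinv :: "nat \<Rightarrow> int \<Rightarrow> top" where "zKinv r a = restr r (lin_ext (imgKinv a))"

(* U(infinity,r) = zeta_r(U(infinity)) = subalgebra of End(Omega^(tensor r)) generated
   by the images of the generators *)
inductive_set Ualg :: "nat \<Rightarrow> top set" for r :: nat where
  one: "restr r id \<in> Ualg r"
| genE: "zE r a \<in> Ualg r"
| genF: "zF r a \<in> Ualg r"
| genK: "zK r a \<in> Ualg r"
| genKinv: "zKinv r a \<in> Ualg r"
| add: "A \<in> Ualg r \<Longrightarrow> B \<in> Ualg r \<Longrightarrow> (\<lambda>x u. A x u + B x u) \<in> Ualg r"
| smul: "A \<in> Ualg r \<Longrightarrow> (\<lambda>x u. c * A x u) \<in> Ualg r"
| comp: "A \<in> Ualg r \<Longrightarrow> B \<in> Ualg r \<Longrightarrow> A \<circ> B \<in> Ualg r"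

definition Umodule :: "nat \<Rightarrow> (K \<Rightarrow> 'm::ab_group_add \<Rightarrow> 'm) \<Rightarrow> (top \<Rightarrow> 'm \<Rightarrow> 'm) \<Rightarrow> bool" where
  "Umodule r sm rho \<longleftrightarrow> vector_space sm
     \<and> (\<forall>A\<in>Ualg r. Vector_Spaces.linear sm sm (rho A))
     \<and> rho (restr r id) = id
     \<and> (\<forall>A\<in>Ualg r. \<forall>B\<in>Ualg r. rho (\<lambda>x u. A x u + B x u) = (\<lambda>m. rho A m + rho B m))
     \<and> (\<forall>c. \<forall>A\<in>Ualg r. rho (\<lambda>x u. c * A x u) = (\<lambda>m. sm c (rho A m)))
     \<and> (\<forall>A\<in>Ualg r. \<forall>B\<in>Ualg r. rho (A \<circ> B) = rho A \<circ> rho B)"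

definition Uinf_module :: "(K \<Rightarrow> 'm::ab_group_add \<Rightarrow> 'm) \<Rightarrow> (int \<Rightarrow> 'm \<Rightarrow> 'm) \<Rightarrow> (int \<Rightarrow> 'm \<Rightarrow> 'm)
     \<Rightarrow> (int \<Rightarrow> 'm \<Rightarrow> 'm) \<Rightarrow> (int \<Rightarrow> 'm \<Rightarrow> 'm) \<Rightarrow> bool" where
  "Uinf_module sm E F Kp Km \<longleftrightarrow> vector_space sm
     \<and> (\<forall>i. Vector_Spaces.linear sm sm (E i) \<and> Vector_Spaces.linear sm sm (F i)
            \<and> Vector_Spaces.linear sm sm (Kp i) \<and> Vector_Spaces.linear sm sm (Km i))
     \<and> (\<forall>i j m. Kp i (Kp j m) = Kp j (Kp i m))
     \<and> (\<forall>i m. Kp i (Km i m) = m \<and> Km i (Kp i m) = m)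
     \<and> (\<forall>i j m. Kp i (E j m) = sm (vq powi ((if i = j then 1 else 0) - (if i = j + 1 then 1 else 0))) (E j (Kp i m)))
     \<and> (\<forall>i j m. Kp i (F j m) = sm (vq powi ((if i = j + 1 then 1 else 0) - (if i = j then 1 else 0))) (F j (Kp i m)))
     \<and> (\<forall>i j m. \<bar>i - j\<bar> > 1 \<longrightarrow> E i (E j m) = E j (E i m) \<and> F i (F j m) = F j (F i m))
     \<and> (\<forall>i j m. E i (F j m) - F j (E i m) =
            (if i = j then sm (inverse (vq - inverse vq)) (Kp i (Km (i + 1) m) - Kp (i + 1) (Km i m)) else 0))
     \<and> (\<forall>i j m. \<bar>i - j\<bar> = 1 \<longrightarrow>
            E i (E i (E j m)) - sm (vq + inverse vq) (E i (E j (E i m))) + E j (E i (E i m)) = 0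
          \<and> F i (F i (F j m)) - sm (vq + inverse vq) (F i (F j (F i m))) + F j (F i (F i m)) = 0)"

definition weight_space :: "(K \<Rightarrow> 'm::ab_group_add \<Rightarrow> 'm) \<Rightarrow> (int \<Rightarrow> 'm \<Rightarrow> 'm) \<Rightarrow> (int \<Rightarrow> int) \<Rightarrow> 'm set" where
  "weight_space sm Kp lam = {m. \<forall>i. Kp i m = sm (vq powi lam i) m}"

(* M = sum of its weight spaces (the sum is automatically direct) *)
definition weight_module :: "(K \<Rightarrow> 'm::ab_group_add \<Rightarrow> 'm) \<Rightarrow> (int \<Rightarrow> 'm \<Rightarrow> 'm) \<Rightarrow> bool" where
  "weight_module sm Kp \<longleftrightarrow> (\<forall>m. \<exists>L f. finite L \<and> (\<forall>lam\<in>L. f lam \<in> weight_space sm Kp lam)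
                                  \<and> m = (\<Sum>lam\<in>L. f lam))"

definition Cpol :: "(K \<Rightarrow> 'm::ab_group_add \<Rightarrow> 'm) \<Rightarrow> (int \<Rightarrow> 'm \<Rightarrow> 'm) \<Rightarrow> bool" where
  "Cpol sm Kp \<longleftrightarrow> weight_module sm Kp
     \<and> (\<forall>lam. (\<exists>m\<in>weight_space sm Kp lam. m \<noteq> 0) \<longrightarrow> finite {i. lam i \<noteq> 0} \<and> (\<forall>i. 0 \<le> lam i))"

definition Cint :: "(K \<Rightarrow> 'm::ab_group_add \<Rightarrow> 'm) \<Rightarrow> (int \<Rightarrow> 'm \<Rightarrow> 'm) \<Rightarrow> (int \<Rightarrow> 'm \<Rightarrow> 'm)
     \<Rightarrow> (int \<Rightarrow> 'm \<Rightarrow> 'm) \<Rightarrow> bool" where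
  "Cint sm E F Kp \<longleftrightarrow> weight_module sm Kp
     \<and> (\<forall>m i. \<exists>N. \<forall>n\<ge>N. (E i ^^ n) m = 0 \<and> (F i ^^ n) m = 0)"

definition Cobj :: "nat \<Rightarrow> (K \<Rightarrow> 'm::ab_group_add \<Rightarrow> 'm) \<Rightarrow> (top \<Rightarrow> 'm \<Rightarrow> 'm) \<Rightarrow> bool" where
  "Cobj r sm rho \<longleftrightarrow> Umodule r sm rho \<and> weight_module sm (\<lambda>i. rho (zK r i))"

definition Uhom :: "nat \<Rightarrow> (top \<Rightarrow> top) \<Rightarrow> bool" where
  "Uhom r phi \<longleftrightarrow> phi ` Ualg (Suc r) = Ualg r
     \<and> phi (restr (Suc r) id) = restr r id
     \<and> (\<forall>A\<in>Ualg (Suc r). \<forall>B\<in>Ualg (Suc r). phi (\<lambda>x u. A x u + B x u) = (\<lambda>x u. phi A x u + phi B x u))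
     \<and> (\<forall>c. \<forall>A\<in>Ualg (Suc r). phi (\<lambda>x u. c * A x u) = (\<lambda>x u. c * phi A x u))
     \<and> (\<forall>A\<in>Ualg (Suc r). \<forall>B\<in>Ualg (Suc r). phi (A \<circ> B) = phi A \<circ> phi B)
     \<and> (\<forall>i. phi (zE (Suc r) i) = zE r i \<and> phi (zF (Suc r) i) = zF r i \<and> phi (zK (Suc r) i) = zK r i)"

end

theory Submission
  imports Defs
begin

text \<open>
  Splitting off the last letter of a word is the coproduct, so
  each defining relation of U(\<infinity>) holds on the tensor space by induction on the word; since
  U(\<infinity>,r) acts on a module through an algebra homomorphism, the module is a U(\<infinity>)-module.

  K_i acts on \<omega>_w by v^(number of letters i in w), and at most r distinct letters occur in w.
  Hence \<Prod>_{k \<le> r} (K_i - v^k) and \<Prod>_{i \<in> S} (K_i - 1), for |S| = r + 1, vanish in U(\<infinity>,r),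
  which forces every weight to be nonnegative and finitely supported; similarly
  E_i^(r+1) = F_i^(r+1) = 0.

  Finally, A \<in> U(\<infinity>,r+1) acts on y \<otimes> \<omega>_c, for all large c, as A' y \<otimes> \<omega>_c for a unique
  A' \<in> U(\<infinity>,r), and A \<mapsto> A' is the required surjective homomorphism.
\<close>

lemma vq_nonzero [simp]: "vq \<noteq> 0"
  by (simp add: vq_def eq_fract Zero_fract_def)

lemma vq_power: "vq ^ k = Fract ([:0, 1:] ^ k) 1"
  by (induction k) (simp_all add: vq_def One_fract_def)

lemma vq_power_eq_1_iff: "vq ^ k = 1 \<longleftrightarrow> k = 0"
proof
  assume "vq ^ k = 1"
  then have "[:0, 1::rat:] ^ k = 1" by (simp add: vq_power One_fract_def eq_fract)
  then have "degree ([:0, 1::rat:] ^ k) = 0" by simp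
  then show "k = 0" by (simp add: degree_power_eq)
qed simp

lemma vq_powi_eq_1_iff: "vq powi n = 1 \<longleftrightarrow> n = 0"
proof (cases "n \<ge> 0")
  case True
  then show ?thesis using vq_power_eq_1_iff[of "nat n"] by (auto simp: power_int_def)
next
  case False
  then show ?thesis using vq_power_eq_1_iff[of "nat (- n)"] by (auto simp: power_int_def power_inverse)
qed

lemma vq_powi_inject: "vq powi a = vq powi b \<longleftrightarrow> a = b"
  using vq_powi_eq_1_iff[of "a - b"] by (auto simp: power_int_diff)

lemma vq_minus_inverse_nonzero [simp]: "vq - inverse vq \<noteq> 0"
proof
  assume "vq - inverse vq = 0"
  then have "vq powi 2 = 1" by (simp add: power2_eq_square field_simps)
  then show False using vq_powi_eq_1_iff[of 2] by simp
qed

section \<open>Coordinate formulas for the generators\<close>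

definition Ktilde_exp :: "int \<Rightarrow> int list \<Rightarrow> int" where
  "Ktilde_exp a u = (\<Sum>b\<leftarrow>u. dK a b)"

text \<open>actE a x u is the coefficient of \<omega>_u in E_a x, obtained by reading imgE backwards:
  \<omega>_w contributes to \<omega>_u iff w = u[k := a + 1] with u ! k = a.\<close>

definition actE :: "int \<Rightarrow> tvec \<Rightarrow> tvec" where
  "actE a x u = (\<Sum>k<length u. if u ! k = a then x (u[k := a + 1]) *
       vq powi (\<Sum>j\<in>{k<..<length u}. dK a (u ! j)) else 0)"

definition actF :: "int \<Rightarrow> tvec \<Rightarrow> tvec" where
  "actF a x u = (\<Sum>k<length u. if u ! k = a + 1 then x (u[k := a]) *
       vq powi (- (\<Sum>j<k. dK a (u ! j))) else 0)"

definition actK :: "int \<Rightarrow> tvec \<Rightarrow> tvec" where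
  "actK a x u = vq powi int (count_list u a) * x u"

definition actKinv :: "int \<Rightarrow> tvec \<Rightarrow> tvec" where
  "actKinv a x u = vq powi (- int (count_list u a)) * x u"

lemma length_filter_eq_count_list: "length (filter (\<lambda>b. b = a) w) = count_list w a"
  by (induction w) auto

lemma sum_mult_if_eq:
  fixes x e :: "'a \<Rightarrow> 'b::comm_semiring_1"
  assumes "finite S"
  shows "(\<Sum>w\<in>S. x w * (if w = c then e w else 0)) = (if c \<in> S then x c * e c else 0)"
  using assms by (simp add: if_distrib[of "(*) _"] cong: if_cong)

lemma update_eq_iff_swap:
  assumes "k < length u"
  shows "(w ! k = b \<and> u = w[k := a]) \<longleftrightarrow> (u ! k = a \<and> w = u[k := b])"
  using assms by (auto intro!: nth_equalityI simp: nth_list_update)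

lemma lin_ext_imgE:
  assumes fin: "finite {w. x w \<noteq> 0}"
  shows "lin_ext (imgE a) x u = actE a x u"
proof -
  let ?S = "{w. x w \<noteq> 0}"
  let ?e = "\<lambda>w k. vq powi (\<Sum>j\<in>{k<..<length w}. dK a (w ! j))"
  let ?c = "\<lambda>w k. w ! k = a + 1 \<and> u = w[k := a]"
  have length_swap: "(\<Sum>k<length w. if ?c w k then ?e w k else 0)
      = (\<Sum>k<length u. if ?c w k then ?e w k else 0)" for w
  proof (cases "length w = length u")
    case False
    then have "\<And>k. u \<noteq> w[k := a]" by auto
    then show ?thesis by simp
  qed simp
  have "lin_ext (imgE a) x u = (\<Sum>w\<in>?S. x w * (\<Sum>k<length u. if ?c w k then ?e w k else 0))"
    unfolding lin_ext_def imgE_def using length_swap by simp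
  also have "\<dots> = (\<Sum>k<length u. \<Sum>w\<in>?S. x w * (if ?c w k then ?e w k else 0))"
    by (simp add: sum_distrib_left sum.swap[of _ ?S])
  also have "\<dots> = (\<Sum>k<length u. \<Sum>w\<in>?S. x w * (if u ! k = a then (if w = u[k := a + 1] then ?e w k else 0) else 0))"
    by (intro sum.cong refl) (simp add: update_eq_iff_swap)
  also have "\<dots> = (\<Sum>k<length u. if u ! k = a then x (u[k := a + 1]) * ?e (u[k := a + 1]) k else 0)"
    by (intro sum.cong refl) (auto simp: sum_mult_if_eq[OF fin])
  also have "\<dots> = actE a x u"
    unfolding actE_def by (intro sum.cong refl) (auto intro!: sum.cong arg_cong[where f="\<lambda>t. vq powi t"])
  finally show ?thesis .
qed

lemma lin_ext_imgF:
  assumes fin: "finite {w. x w \<noteq> 0}"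
  shows "lin_ext (imgF a) x u = actF a x u"
proof -
  let ?S = "{w. x w \<noteq> 0}"
  let ?e = "\<lambda>w k. vq powi (- (\<Sum>j<k. dK a (w ! j)))"
  let ?c = "\<lambda>w k. w ! k = a \<and> u = w[k := a + 1]"
  have length_swap: "(\<Sum>k<length w. if ?c w k then ?e w k else 0)
      = (\<Sum>k<length u. if ?c w k then ?e w k else 0)" for w
  proof (cases "length w = length u")
    case False
    then have "\<And>k. u \<noteq> w[k := a + 1]" by auto
    then show ?thesis by simp
  qed simp
  have "lin_ext (imgF a) x u = (\<Sum>w\<in>?S. x w * (\<Sum>k<length u. if ?c w k then ?e w k else 0))"
    unfolding lin_ext_def imgF_def using length_swap by simp
  also have "\<dots> = (\<Sum>k<length u. \<Sum>w\<in>?S. x w * (if ?c w k then ?e w k else 0))"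
    by (simp add: sum_distrib_left sum.swap[of _ ?S])
  also have "\<dots> = (\<Sum>k<length u. \<Sum>w\<in>?S. x w * (if u ! k = a + 1 then (if w = u[k := a] then ?e w k else 0) else 0))"
    by (intro sum.cong refl) (simp add: update_eq_iff_swap[of _ u _ a "a + 1"])
  also have "\<dots> = (\<Sum>k<length u. if u ! k = a + 1 then x (u[k := a]) * ?e (u[k := a]) k else 0)"
    by (intro sum.cong refl) (auto simp: sum_mult_if_eq[OF fin])
  also have "\<dots> = actF a x u"
    unfolding actF_def by (intro sum.cong refl) (auto intro!: sum.cong arg_cong[where f="\<lambda>t. vq powi t"])
  finally show ?thesis .
qed

lemma lin_ext_imgK:
  assumes "finite {w. x w \<noteq> 0}"
  shows "lin_ext (imgK a) x u = actK a x u"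
  using sum_mult_if_eq[OF assms, of x u "\<lambda>w. vq powi int (count_list w a)"]
  unfolding lin_ext_def imgK_def actK_def length_filter_eq_count_list
  by (auto simp: eq_commute[of u] mult.commute)

lemma lin_ext_imgKinv:
  assumes "finite {w. x w \<noteq> 0}"
  shows "lin_ext (imgKinv a) x u = actKinv a x u"
  using sum_mult_if_eq[OF assms, of x u "\<lambda>w. vq powi (- int (count_list w a))"]
  unfolding lin_ext_def imgKinv_def actKinv_def length_filter_eq_count_list
  by (auto simp: eq_commute[of u] mult.commute)

lemma Ktilde_exp_conv_sum: "Ktilde_exp a u = (\<Sum>j<length u. dK a (u ! j))"
  unfolding Ktilde_exp_def by (simp add: sum_list_sum_nth atLeast0LessThan)

lemma Ktilde_exp_Nil [simp]: "Ktilde_exp a [] = 0" by (simp add: Ktilde_exp_def)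
lemma Ktilde_exp_snoc [simp]: "Ktilde_exp a (u @ [b]) = Ktilde_exp a u + dK a b" by (simp add: Ktilde_exp_def)

lemma actE_Nil [simp]: "actE a x [] = 0" by (simp add: actE_def)
lemma actF_Nil [simp]: "actF a x [] = 0" by (simp add: actF_def)

text \<open>The coproduct \<Delta>(E_a) = E_a \<otimes> K~_a + 1 \<otimes> E_a, read on the last tensor factor.\<close>

lemma actE_snoc:
  "actE a x (u @ [b]) = vq powi dK a b * actE a (\<lambda>w. x (w @ [b])) u
      + (if b = a then x (u @ [a + 1]) else 0)"
proof -
  let ?F = "\<lambda>k. if (u @ [b]) ! k = a then x ((u @ [b])[k := a + 1]) *
       vq powi (\<Sum>j\<in>{k<..<length (u @ [b])}. dK a ((u @ [b]) ! j)) else 0"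
  have inner: "?F k = vq powi dK a b * (if u ! k = a then x (u[k := a + 1] @ [b]) *
       vq powi (\<Sum>j\<in>{k<..<length u}. dK a (u ! j)) else 0)" if k: "k < length u" for k
  proof -
    have "{k<..<length (u @ [b])} = insert (length u) {k<..<length u}"
      using k by auto
    then have "(\<Sum>j\<in>{k<..<length (u @ [b])}. dK a ((u @ [b]) ! j))
        = (\<Sum>j\<in>{k<..<length u}. dK a (u ! j)) + dK a b"
      by (simp add: nth_append)
    with k show ?thesis by (simp add: nth_append list_update_append power_int_add)
  qed
  have "{length u<..<length (u @ [b])} = {}"
    by auto
  then have last: "?F (length u) = (if b = a then x (u @ [a + 1]) else 0)"
    by simp
  have "actE a x (u @ [b]) = (\<Sum>k<length u. ?F k) + ?F (length u)"
    unfolding actE_def by (simp only: length_append_singleton sum.lessThan_Suc)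
  also have "(\<Sum>k<length u. ?F k) = vq powi dK a b * actE a (\<lambda>w. x (w @ [b])) u"
    unfolding actE_def sum_distrib_left by (rule sum.cong) (auto simp: inner)
  finally show ?thesis using last by simp
qed

lemma actF_snoc:
  "actF a x (u @ [b]) = actF a (\<lambda>w. x (w @ [b])) u
      + (if b = a + 1 then inverse (vq powi Ktilde_exp a u) * x (u @ [a]) else 0)"
proof -
  let ?F = "\<lambda>k. if (u @ [b]) ! k = a + 1 then x ((u @ [b])[k := a]) *
       vq powi (- (\<Sum>j<k. dK a ((u @ [b]) ! j))) else 0"
  have inner: "?F k = (if u ! k = a + 1 then x (u[k := a] @ [b]) *
       vq powi (- (\<Sum>j<k. dK a (u ! j))) else 0)" if k: "k < length u" for k
  proof -
    have "(\<Sum>j<k. dK a ((u @ [b]) ! j)) = (\<Sum>j<k. dK a (u ! j))"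
      by (rule sum.cong) (use k in \<open>auto simp: nth_append\<close>)
    with k show ?thesis by (simp add: nth_append list_update_append)
  qed
  have "(\<Sum>j<length u. dK a ((u @ [c]) ! j)) = Ktilde_exp a u" for c
    unfolding Ktilde_exp_conv_sum by (rule sum.cong) (auto simp: nth_append)
  then have last: "?F (length u) = (if b = a + 1 then inverse (vq powi Ktilde_exp a u) * x (u @ [a]) else 0)"
    by (simp add: mult.commute power_int_minus)
  have "actF a x (u @ [b]) = (\<Sum>k<length u. ?F k) + ?F (length u)"
    unfolding actF_def by (simp only: length_append_singleton sum.lessThan_Suc)
  also have "(\<Sum>k<length u. ?F k) = actF a (\<lambda>w. x (w @ [b])) u"
    unfolding actF_def by (rule sum.cong) (auto simp: inner)
  finally show ?thesis using last by simp
qed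

lemma actE_add [simp]: "actE a (\<lambda>w. f w + g w) u = actE a f u + actE a g u"
  unfolding actE_def by (simp add: sum.distrib[symmetric], intro sum.cong) (auto simp: distrib_right)
lemma actE_mult [simp]: "actE a (\<lambda>w. c * f w) u = c * actE a f u"
  unfolding actE_def by (simp add: sum_distrib_left, intro sum.cong) auto
lemma actE_zero [simp]: "actE a (\<lambda>_. 0) = (\<lambda>_. 0)"
  by (simp add: actE_def fun_eq_iff cong: if_cong)
lemma actF_add [simp]: "actF a (\<lambda>w. f w + g w) u = actF a f u + actF a g u"
  unfolding actF_def by (simp add: sum.distrib[symmetric], intro sum.cong) (auto simp: distrib_right)
lemma actF_mult [simp]: "actF a (\<lambda>w. c * f w) u = c * actF a f u"
  unfolding actF_def by (simp add: sum_distrib_left, intro sum.cong) auto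
lemma actF_zero [simp]: "actF a (\<lambda>_. 0) = (\<lambda>_. 0)"
  by (simp add: actF_def fun_eq_iff cong: if_cong)

lemma actE_weighted:
  assumes "\<And>k. k < length u \<Longrightarrow> u ! k = a \<Longrightarrow> h (u[k := a + 1]) = h u + d"
  shows "actE a (\<lambda>w. vq powi (h w) * f w) u = vq powi (h u + d) * actE a f u"
  unfolding actE_def sum_distrib_left
  by (intro sum.cong) (auto simp: assms)

lemma actF_weighted:
  assumes "\<And>k. k < length u \<Longrightarrow> u ! k = a + 1 \<Longrightarrow> h (u[k := a]) = h u + d"
  shows "actF a (\<lambda>w. vq powi (h w) * f w) u = vq powi (h u + d) * actF a f u"
  unfolding actF_def sum_distrib_left
  by (intro sum.cong) (auto simp: assms)

lemma Ktilde_exp_update: "k < length u \<Longrightarrow> Ktilde_exp c (u[k := y]) = Ktilde_exp c u - dK c (u ! k) + dK c y"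
  by (induction u arbitrary: k) (auto simp: Ktilde_exp_def split: nat.split)

lemma actE_Ktilde_weighted[simp]: "actE a (\<lambda>w. inverse (vq powi Ktilde_exp c w) * f w) u
   = inverse (vq powi Ktilde_exp c u) * (vq powi (dK c a - dK c (a + 1)) * actE a f u)"
proof -
  have "actE a (\<lambda>w. inverse (vq powi Ktilde_exp c w) * f w) u = actE a (\<lambda>w. vq powi (- Ktilde_exp c w) * f w) u"
    by (simp add: power_int_minus)
  also have "\<dots> = vq powi (- Ktilde_exp c u + (dK c a - dK c (a + 1))) * actE a f u"
    by (rule actE_weighted) (simp add: Ktilde_exp_update)
  also have "vq powi (- Ktilde_exp c u + (dK c a - dK c (a + 1))) = inverse (vq powi Ktilde_exp c u) * vq powi (dK c a - dK c (a + 1))"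
    by (subst power_int_add) (simp_all add: power_int_minus)
  finally show ?thesis by (simp add: mult.assoc)
qed

lemma actF_Ktilde_weighted[simp]: "actF a (\<lambda>w. inverse (vq powi Ktilde_exp c w) * f w) u
   = inverse (vq powi Ktilde_exp c u) * (vq powi (dK c (a + 1) - dK c a) * actF a f u)"
proof -
  have "actF a (\<lambda>w. inverse (vq powi Ktilde_exp c w) * f w) u = actF a (\<lambda>w. vq powi (- Ktilde_exp c w) * f w) u"
    by (simp add: power_int_minus)
  also have "\<dots> = vq powi (- Ktilde_exp c u + (dK c (a + 1) - dK c a)) * actF a f u"
    by (rule actF_weighted) (simp add: Ktilde_exp_update)
  also have "vq powi (- Ktilde_exp c u + (dK c (a + 1) - dK c a)) = inverse (vq powi Ktilde_exp c u) * vq powi (dK c (a + 1) - dK c a)"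
    by (subst power_int_add) (simp_all add: power_int_minus)
  finally show ?thesis by (simp add: mult.assoc)
qed

section \<open>The defining relations on the tensor space\<close>

lemma diff_add_eq_0_iff: "a - b + c = (0::'a::ab_group_add) \<longleftrightarrow> a = b - c"
  by (simp add: algebra_simps)

lemma actE_serre:
  "actE i (actE i (actE (i+1) x)) u - (vq + inverse vq) * actE i (actE (i+1) (actE i x)) u
     + actE (i+1) (actE i (actE i x)) u = 0"
proof (induction u arbitrary: x rule: rev_induct)
  case (snoc b u)
  note IH = snoc[of "\<lambda>w. x (w @ [b])", unfolded diff_add_eq_0_iff]
  consider "b = i" | "b = i + 1" | "b = i + 2" | "b \<noteq> i" "b \<noteq> i + 1" "b \<noteq> i + 2" by blast
  then show ?case
    by cases (use IH in \<open>simp add: actE_snoc dK_def; simp add: field_simps\<close>)+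
qed simp

lemma actE_serre':
  "actE (i+1) (actE (i+1) (actE i x)) u - (vq + inverse vq) * actE (i+1) (actE i (actE (i+1) x)) u
     + actE i (actE (i+1) (actE (i+1) x)) u = 0"
proof (induction u arbitrary: x rule: rev_induct)
  case (snoc b u)
  note IH = snoc[of "\<lambda>w. x (w @ [b])", unfolded diff_add_eq_0_iff]
  consider "b = i" | "b = i + 1" | "b = i + 2" | "b \<noteq> i" "b \<noteq> i + 1" "b \<noteq> i + 2" by blast
  then show ?case
    by cases (use IH in \<open>simp add: actE_snoc dK_def; simp add: field_simps\<close>)+
qed simp

lemma actF_serre:
  "actF i (actF i (actF (i+1) x)) u - (vq + inverse vq) * actF i (actF (i+1) (actF i x)) u
     + actF (i+1) (actF i (actF i x)) u = 0"
proof (induction u arbitrary: x rule: rev_induct)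
  case (snoc b u)
  note IH = snoc[of "\<lambda>w. x (w @ [b])", unfolded diff_add_eq_0_iff]
  consider "b = i" | "b = i + 1" | "b = i + 2" | "b \<noteq> i" "b \<noteq> i + 1" "b \<noteq> i + 2" by blast
  then show ?case
    by cases (use IH in \<open>simp add: actF_snoc dK_def; (simp add: field_simps power_int_minus)?;
      (simp add: eval_nat_numeral mult_ac)?\<close>)+
qed simp

lemma actF_serre':
  "actF (i+1) (actF (i+1) (actF i x)) u - (vq + inverse vq) * actF (i+1) (actF i (actF (i+1) x)) u
     + actF i (actF (i+1) (actF (i+1) x)) u = 0"
proof (induction u arbitrary: x rule: rev_induct)
  case (snoc b u)
  note IH = snoc[of "\<lambda>w. x (w @ [b])", unfolded diff_add_eq_0_iff]
  consider "b = i" | "b = i + 1" | "b = i + 2" | "b \<noteq> i" "b \<noteq> i + 1" "b \<noteq> i + 2" by blast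
  then show ?case
    by cases (use IH in \<open>simp add: actF_snoc dK_def; (simp add: field_simps power_int_minus)?; (simp add: eval_nat_numeral mult_ac)?\<close>)+
qed simp

lemma actE_commute:
  assumes "\<bar>i - j\<bar> > 1"
  shows "actE i (actE j x) u = actE j (actE i x) u"
proof (induction u arbitrary: x rule: rev_induct)
  case (snoc b u)
  note IH = snoc[of "\<lambda>w. x (w @ [_])"]
  have n: "i \<noteq> j" "i \<noteq> j + 1" "j \<noteq> i + 1" using assms by auto
  show ?case using IH n by (simp add: actE_snoc dK_def; (simp add: field_simps)?)
qed simp

lemma actF_commute:
  assumes "\<bar>i - j\<bar> > 1"
  shows "actF i (actF j x) u = actF j (actF i x) u"
proof (induction u arbitrary: x rule: rev_induct)
  case (snoc b u)
  note IH = snoc[of "\<lambda>w. x (w @ [_])"]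
  have n: "i \<noteq> j" "i \<noteq> j + 1" "j \<noteq> i + 1" using assms by auto
  show ?case using IH n by (simp add: actF_snoc dK_def; (simp add: field_simps)?)
qed simp

lemma actE_actF_commute:
  assumes "i \<noteq> j"
  shows "actE i (actF j x) u = actF j (actE i x) u"
proof (induction u arbitrary: x rule: rev_induct)
  case (snoc b u)
  note IH = snoc[of "\<lambda>w. x (w @ [_])"]
  show ?case using IH assms by (simp add: actE_snoc actF_snoc dK_def; (simp add: field_simps)?)
qed simp

lemma actE_actF_same:
  "actE i (actF i x) u = actF i (actE i x) u
     + inverse (vq - inverse vq) * ((vq powi Ktilde_exp i u - inverse (vq powi Ktilde_exp i u)) * x u)"
proof -
  \<comment> \<open>kept opaque, so that \<open>field_simps\<close> clears it as a single nonzero denominator\<close>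
  obtain q where q: "q = vq - inverse vq" by blast
  have "q \<noteq> 0" unfolding q by (rule vq_minus_inverse_nonzero)
  have "actE i (actF i x) u = actF i (actE i x) u
     + inverse q * ((vq powi Ktilde_exp i u - inverse (vq powi Ktilde_exp i u)) * x u)"
  proof (induction u arbitrary: x rule: rev_induct)
    case (snoc b u)
    note IH = snoc[of "\<lambda>w. x (w @ [b])"]
    consider "b = i" | "b = i + 1" | "b \<noteq> i" "b \<noteq> i + 1" by blast
    then show ?case
      by cases (use IH \<open>q \<noteq> 0\<close> in \<open>simp add: actE_snoc actF_snoc dK_def power_int_add power_int_diff;
        (simp add: field_simps)?; (simp add: q field_simps)?; (simp add: eval_nat_numeral mult_ac)?\<close>)+
  qed simp
  then show ?thesis by (simp add: q)
qed

lemma count_list_update: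
  "k < length u \<Longrightarrow> int (count_list (u[k := y]) c)
     = int (count_list u c) - (if u ! k = c then 1 else 0) + (if y = c then 1 else 0)"
proof (induction u arbitrary: k)
  case (Cons b u)
  show ?case
  proof (cases k)
    case (Suc k')
    then show ?thesis using Cons.IH[of k'] Cons.prems by auto
  qed auto
qed simp

lemma Ktilde_exp_count: "Ktilde_exp i u = int (count_list u i) - int (count_list u (i + 1))"
  by (induction u) (auto simp: Ktilde_exp_def dK_def)

lemma actK_actE: "actK c (actE a x) u = vq powi ((if c = a then 1 else 0) - (if c = a + 1 then 1 else 0)) * actE a (actK c x) u"
proof -
  have "actE a (actK c x) u = actE a (\<lambda>w. vq powi (int (count_list w c)) * x w) u"
    by (simp add: actK_def[abs_def])
  also have "\<dots> = vq powi (int (count_list u c) + ((if c = a + 1 then 1 else 0) - (if c = a then 1 else 0))) * actE a x u"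
    by (rule actE_weighted) (auto simp: count_list_update)
  finally show ?thesis
    by (simp add: actK_def power_int_add power_int_diff field_simps split: if_splits)
qed

lemma actK_actF: "actK c (actF a x) u = vq powi ((if c = a + 1 then 1 else 0) - (if c = a then 1 else 0)) * actF a (actK c x) u"
proof -
  have "actF a (actK c x) u = actF a (\<lambda>w. vq powi (int (count_list w c)) * x w) u"
    by (simp add: actK_def[abs_def])
  also have "\<dots> = vq powi (int (count_list u c) + ((if c = a then 1 else 0) - (if c = a + 1 then 1 else 0))) * actF a x u"
    by (rule actF_weighted) (auto simp: count_list_update)
  finally show ?thesis
    by (simp add: actK_def power_int_add power_int_diff field_simps split: if_splits)
qed

lemma actE_power_vanish: "count_list u a < n \<Longrightarrow> (actE a ^^ n) x u = 0"
proof (induction n arbitrary: u)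
  case (Suc n)
  have z: "(actE a ^^ n) x (u[k := a + 1]) = 0" if "k < length u" "u ! k = a" for k
    using count_list_update[of k u "a + 1" a] that Suc.prems by (intro Suc.IH) simp
  have "(actE a ^^ Suc n) x u = actE a ((actE a ^^ n) x) u" by simp
  also have "\<dots> = 0" unfolding actE_def[of a "(actE a ^^ n) x"]
    by (intro sum.neutral ballI) (simp add: z)
  finally show ?case .
qed simp

lemma actF_power_vanish: "count_list u (a + 1) < n \<Longrightarrow> (actF a ^^ n) x u = 0"
proof (induction n arbitrary: u)
  case (Suc n)
  have z: "(actF a ^^ n) x (u[k := a]) = 0" if "k < length u" "u ! k = a + 1" for k
    using count_list_update[of k u a "a + 1"] that Suc.prems by (intro Suc.IH) simp
  have "(actF a ^^ Suc n) x u = actF a ((actF a ^^ n) x) u" by simp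
  also have "\<dots> = 0" unfolding actF_def[of a "(actF a ^^ n) x"]
    by (intro sum.neutral ballI) (simp add: z)
  finally show ?case .
qed simp

lemma zero_in_Tsp [simp]: "(\<lambda>_. 0) \<in> Tsp r"
  by (simp add: Tsp_def)

lemma Tsp_finite_support: "x \<in> Tsp r \<Longrightarrow> finite {w. x w \<noteq> 0}"
  by (simp add: Tsp_def)

lemma Tsp_length: "x \<in> Tsp r \<Longrightarrow> x w \<noteq> 0 \<Longrightarrow> length w = r"
  by (simp add: Tsp_def)

lemma Tsp_add [simp]: "x \<in> Tsp r \<Longrightarrow> y \<in> Tsp r \<Longrightarrow> (\<lambda>u. x u + y u) \<in> Tsp r"
proof -
  assume "x \<in> Tsp r" "y \<in> Tsp r"
  moreover have "{w. x w + y w \<noteq> 0} \<subseteq> {w. x w \<noteq> 0} \<union> {w. y w \<noteq> 0}" by auto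
  ultimately show ?thesis unfolding Tsp_def by (auto intro: finite_subset)
qed

lemma Tsp_mult_left [simp]: "x \<in> Tsp r \<Longrightarrow> (\<lambda>u. f u * x u) \<in> Tsp r"
  unfolding Tsp_def by (auto intro: finite_subset[of _ "{w. x w \<noteq> 0}"])

lemma Tsp_letter_change:
  assumes x: "x \<in> Tsp r"
    and y: "\<And>u. y u \<noteq> 0 \<Longrightarrow> \<exists>k<length u. u ! k = d \<and> x (u[k := c]) \<noteq> 0"
  shows "y \<in> Tsp r"
proof -
  have support: "u \<in> (\<Union>k<r. (\<lambda>w. w[k := d]) ` {w. x w \<noteq> 0}) \<and> length u = r"
    if yu: "y u \<noteq> 0" for u
  proof -
    obtain k where k: "k < length u" "u ! k = d" "x (u[k := c]) \<noteq> 0"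
      using y[OF yu] by blast
    then have "length u = r" using Tsp_length[OF x k(3)] by simp
    moreover have "u = (u[k := c])[k := d]" using k by (metis list_update_id list_update_overwrite)
    ultimately show ?thesis using k by blast
  qed
  have "finite (\<Union>k<r. (\<lambda>w. w[k := d]) ` {w. x w \<noteq> 0})"
    using Tsp_finite_support[OF x] by simp
  then have "finite {u. y u \<noteq> 0}"
    by (rule finite_subset[rotated]) (use support in blast)
  then show ?thesis unfolding Tsp_def using support by blast
qed

lemma actE_Tsp [simp]: "x \<in> Tsp r \<Longrightarrow> actE a x \<in> Tsp r"
  by (erule Tsp_letter_change[where d = a and c = "a + 1"])
     (auto simp: actE_def elim!: sum.not_neutral_contains_not_neutral split: if_splits)

lemma actF_Tsp [simp]: "x \<in> Tsp r \<Longrightarrow> actF a x \<in> Tsp r"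
  by (erule Tsp_letter_change[where d = "a + 1" and c = a])
     (auto simp: actF_def elim!: sum.not_neutral_contains_not_neutral split: if_splits)

lemma actK_Tsp [simp]: "x \<in> Tsp r \<Longrightarrow> actK a x \<in> Tsp r"
  unfolding actK_def[abs_def] by (rule Tsp_mult_left)

lemma actKinv_Tsp [simp]: "x \<in> Tsp r \<Longrightarrow> actKinv a x \<in> Tsp r"
  unfolding actKinv_def[abs_def] by (rule Tsp_mult_left)

lemma zE_apply [simp]: "x \<in> Tsp r \<Longrightarrow> zE r a x = actE a x"
  by (simp add: zE_def restr_def fun_eq_iff lin_ext_imgE[OF Tsp_finite_support])

lemma zF_apply [simp]: "x \<in> Tsp r \<Longrightarrow> zF r a x = actF a x"
  by (simp add: zF_def restr_def fun_eq_iff lin_ext_imgF[OF Tsp_finite_support])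

lemma zK_apply [simp]: "x \<in> Tsp r \<Longrightarrow> zK r a x = actK a x"
  by (simp add: zK_def restr_def fun_eq_iff lin_ext_imgK[OF Tsp_finite_support])

lemma zKinv_apply [simp]: "x \<in> Tsp r \<Longrightarrow> zKinv r a x = actKinv a x"
  by (simp add: zKinv_def restr_def fun_eq_iff lin_ext_imgKinv[OF Tsp_finite_support])

lemma restr_id_apply [simp]: "x \<in> Tsp r \<Longrightarrow> restr r id x = x"
  by (simp add: restr_def)

lemma zE_outside [simp]: "x \<notin> Tsp r \<Longrightarrow> zE r a x = (\<lambda>_. 0)"
  by (simp add: zE_def restr_def)

lemma zF_outside [simp]: "x \<notin> Tsp r \<Longrightarrow> zF r a x = (\<lambda>_. 0)"
  by (simp add: zF_def restr_def)

lemma zK_outside [simp]: "x \<notin> Tsp r \<Longrightarrow> zK r a x = (\<lambda>_. 0)"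
  by (simp add: zK_def restr_def)

lemma zKinv_outside [simp]: "x \<notin> Tsp r \<Longrightarrow> zKinv r a x = (\<lambda>_. 0)"
  by (simp add: zKinv_def restr_def)

lemma restr_id_outside [simp]: "x \<notin> Tsp r \<Longrightarrow> restr r id x = (\<lambda>_. 0)"
  by (simp add: restr_def)

lemma actK_zero [simp]: "actK a (\<lambda>_. 0) = (\<lambda>_. 0)"
  by (simp add: actK_def fun_eq_iff)

lemma actKinv_zero [simp]: "actKinv a (\<lambda>_. 0) = (\<lambda>_. 0)"
  by (simp add: actKinv_def fun_eq_iff)

lemma Ualg_support:
  assumes "A \<in> Ualg r"
  shows "(\<forall>x. x \<notin> Tsp r \<longrightarrow> A x = (\<lambda>_. 0)) \<and> (\<forall>x\<in>Tsp r. A x \<in> Tsp r) \<and> A (\<lambda>_. 0) = (\<lambda>_. 0)"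
  using assms by induction simp_all

lemma Ualg_outside_Tsp: "A \<in> Ualg r \<Longrightarrow> x \<notin> Tsp r \<Longrightarrow> A x = (\<lambda>_. 0)"
  using Ualg_support by blast

lemma Ualg_Tsp: "A \<in> Ualg r \<Longrightarrow> x \<in> Tsp r \<Longrightarrow> A x \<in> Tsp r"
  using Ualg_support by blast

lemma Tsp_cases_eqI:
  "(\<And>x. x \<in> Tsp r \<Longrightarrow> F x = G x) \<Longrightarrow> (\<And>x. x \<notin> Tsp r \<Longrightarrow> F x = G x) \<Longrightarrow> F = G"
  by (rule ext) (case_tac "x \<in> Tsp r", simp_all)

lemma Ualg_eqI:
  assumes "A \<in> Ualg r" "B \<in> Ualg r" "\<And>x u. x \<in> Tsp r \<Longrightarrow> A x u = B x u"
  shows "A = B"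
proof
  fix x show "A x = B x"
    by (cases "x \<in> Tsp r") (auto simp: Ualg_outside_Tsp[OF assms(1)] Ualg_outside_Tsp[OF assms(2)] assms(3))
qed

declare Ualg.intros [simp, intro]

lemma Ualg_zero [simp]: "(\<lambda>x u. 0) \<in> Ualg r"
  using Ualg.smul[of "restr r id" r 0] by simp

lemma Ualg_diff [simp]:
  assumes "A \<in> Ualg r" "B \<in> Ualg r"
  shows "(\<lambda>x u. A x u - B x u) \<in> Ualg r"
proof -
  have "(\<lambda>x u. A x u + (- 1) * B x u) \<in> Ualg r" using assms by (intro Ualg.add Ualg.smul)
  then show ?thesis by simp
qed

lemma zK_commute: "zK r i \<circ> zK r j = zK r j \<circ> zK r i"
  by (rule Tsp_cases_eqI[where r = r]) (simp_all add: fun_eq_iff actK_def)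

lemma zK_zKinv: "zK r i \<circ> zKinv r i = restr r id"
  by (rule Tsp_cases_eqI[where r = r]) (simp_all add: fun_eq_iff actK_def actKinv_def power_int_minus)

lemma zKinv_zK: "zKinv r i \<circ> zK r i = restr r id"
  by (rule Tsp_cases_eqI[where r = r]) (simp_all add: fun_eq_iff actK_def actKinv_def power_int_minus)

lemma zK_zE:
  "zK r i \<circ> zE r j = (\<lambda>x u. vq powi ((if i = j then 1 else 0) - (if i = j + 1 then 1 else 0)) * (zE r j \<circ> zK r i) x u)"
  by (rule Tsp_cases_eqI[where r = r]) (simp_all add: fun_eq_iff actK_actE)

lemma zK_zF:
  "zK r i \<circ> zF r j = (\<lambda>x u. vq powi ((if i = j + 1 then 1 else 0) - (if i = j then 1 else 0)) * (zF r j \<circ> zK r i) x u)"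
  by (rule Tsp_cases_eqI[where r = r]) (simp_all add: fun_eq_iff actK_actF)

lemma zE_commute: "\<bar>i - j\<bar> > 1 \<Longrightarrow> zE r i \<circ> zE r j = zE r j \<circ> zE r i"
  by (rule Tsp_cases_eqI[where r = r]) (simp_all add: fun_eq_iff actE_commute)

lemma zF_commute: "\<bar>i - j\<bar> > 1 \<Longrightarrow> zF r i \<circ> zF r j = zF r j \<circ> zF r i"
  by (rule Tsp_cases_eqI[where r = r]) (simp_all add: fun_eq_iff actF_commute)

lemma zE_zF_commute: "i \<noteq> j \<Longrightarrow> zE r i \<circ> zF r j = zF r j \<circ> zE r i"
  by (rule Tsp_cases_eqI[where r = r]) (simp_all add: fun_eq_iff actE_actF_commute)

lemma zE_zF_same:
  "zE r i \<circ> zF r i = (\<lambda>x u. (zF r i \<circ> zE r i) x u + inverse (vq - inverse vq) *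
     ((zK r i \<circ> zKinv r (i + 1)) x u - (zK r (i + 1) \<circ> zKinv r i) x u))"
  by (rule Tsp_cases_eqI[where r = r]) (simp_all add: fun_eq_iff actE_actF_same actK_def actKinv_def Ktilde_exp_count
      power_int_diff power_int_minus field_simps)

lemma zE_serre:
  "(\<lambda>x u. (zE r i \<circ> (zE r i \<circ> zE r j)) x u - (vq + inverse vq) * (zE r i \<circ> (zE r j \<circ> zE r i)) x u
      + (zE r j \<circ> (zE r i \<circ> zE r i)) x u) = (\<lambda>x u. 0)"
  if "\<bar>i - j\<bar> = 1"
proof -
  from that consider "j = i + 1" | "i = j + 1" by linarith
  then show ?thesis
    by cases (rule Tsp_cases_eqI[where r = r]; simp add: fun_eq_iff actE_serre actE_serre')+
qed

lemma zF_serre: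
  "(\<lambda>x u. (zF r i \<circ> (zF r i \<circ> zF r j)) x u - (vq + inverse vq) * (zF r i \<circ> (zF r j \<circ> zF r i)) x u
      + (zF r j \<circ> (zF r i \<circ> zF r i)) x u) = (\<lambda>x u. 0)"
  if "\<bar>i - j\<bar> = 1"
proof -
  from that consider "j = i + 1" | "i = j + 1" by linarith
  then show ?thesis
    by cases (rule Tsp_cases_eqI[where r = r]; simp add: fun_eq_iff actF_serre actF_serre')+
qed

context
  fixes r :: nat and sm :: "K \<Rightarrow> 'm::ab_group_add \<Rightarrow> 'm" and rho :: "top \<Rightarrow> 'm \<Rightarrow> 'm"
  assumes U: "Umodule r sm rho"
begin

lemma Umodule_vector_space: "vector_space sm"
  using U unfolding Umodule_def by blast

lemma Umodule_linear: "A \<in> Ualg r \<Longrightarrow> Vector_Spaces.linear sm sm (rho A)"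
  using U unfolding Umodule_def by blast

lemma rho_one [simp]: "rho (restr r id) m = m"
  using U unfolding Umodule_def by simp

lemma rho_add [simp]: "A \<in> Ualg r \<Longrightarrow> B \<in> Ualg r \<Longrightarrow> rho (\<lambda>x u. A x u + B x u) m = rho A m + rho B m"
  using U unfolding Umodule_def by simp

lemma rho_smul [simp]: "A \<in> Ualg r \<Longrightarrow> rho (\<lambda>x u. c * A x u) m = sm c (rho A m)"
  using U unfolding Umodule_def by simp

lemma rho_comp [simp]: "A \<in> Ualg r \<Longrightarrow> B \<in> Ualg r \<Longrightarrow> rho (A \<circ> B) m = rho A (rho B m)"
  using U unfolding Umodule_def by simp

lemma rho_zero [simp]: "rho (\<lambda>x u. 0) m = 0"
  using rho_smul[of "restr r id" 0 m] Umodule_vector_space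
  by (simp add: module_iff_vector_space[symmetric] module.scale_zero_left)

lemma rho_diff [simp]:
  assumes "A \<in> Ualg r" "B \<in> Ualg r"
  shows "rho (\<lambda>x u. A x u - B x u) m = rho A m - rho B m"
proof -
  have "rho (\<lambda>x u. A x u + (- 1) * B x u) m = rho A m + sm (- 1) (rho B m)"
    using assms by (simp only: rho_add rho_smul Ualg.smul)
  then show ?thesis using Umodule_vector_space
    by (simp add: module_iff_vector_space[symmetric] module.scale_minus_left module.scale_one)
qed

lemma rho_commute:
  "A \<in> Ualg r \<Longrightarrow> B \<in> Ualg r \<Longrightarrow> A \<circ> B = B \<circ> A \<Longrightarrow> rho A (rho B m) = rho B (rho A m)"
  by (metis rho_comp)

lemma rho_serre:
  assumes "A \<in> Ualg r" "B \<in> Ualg r"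
    and "(\<lambda>x u. (A \<circ> (A \<circ> B)) x u - c * (A \<circ> (B \<circ> A)) x u + (B \<circ> (A \<circ> A)) x u) = (\<lambda>x u. 0)"
  shows "rho A (rho A (rho B m)) - sm c (rho A (rho B (rho A m))) + rho B (rho A (rho A m)) = 0"
  using arg_cong[OF assms(3), of "\<lambda>X. rho X m"] assms(1,2) by (simp del: comp_apply)

lemma Uinf_module_of_Umodule:
  "Uinf_module sm (\<lambda>i. rho (zE r i)) (\<lambda>i. rho (zF r i)) (\<lambda>i. rho (zK r i)) (\<lambda>i. rho (zKinv r i))"
  unfolding Uinf_module_def
proof (intro conjI allI impI)
  fix i j m
  show "rho (zK r i) (rho (zE r j) m) = sm (vq powi ((if i = j then 1 else 0) - (if i = j + 1 then 1 else 0))) (rho (zE r j) (rho (zK r i) m))"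
    using arg_cong[where f = "\<lambda>X. rho X m", OF zK_zE[of r i j]] by (simp del: comp_apply)
  show "rho (zK r i) (rho (zF r j) m) = sm (vq powi ((if i = j + 1 then 1 else 0) - (if i = j then 1 else 0))) (rho (zF r j) (rho (zK r i) m))"
    using arg_cong[where f = "\<lambda>X. rho X m", OF zK_zF[of r i j]] by (simp del: comp_apply)
  show "rho (zE r i) (rho (zF r j) m) - rho (zF r j) (rho (zE r i) m) =
       (if i = j then sm (inverse (vq - inverse vq)) (rho (zK r i) (rho (zKinv r (i + 1)) m) - rho (zK r (i + 1)) (rho (zKinv r i) m)) else 0)"
  proof (cases "i = j")
    case True
    then show ?thesis
      using arg_cong[where f = "\<lambda>X. rho X m", OF zE_zF_same[of r i]] by (simp del: comp_apply)
  next
    case False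
    then show ?thesis using rho_commute[OF _ _ zE_zF_commute[OF False]] by simp
  qed
next
  fix i j m
  show "rho (zK r i) (rho (zK r j) m) = rho (zK r j) (rho (zK r i) m)"
    by (rule rho_commute) (simp_all add: zK_commute)
  show "rho (zK r i) (rho (zKinv r i) m) = m" "rho (zKinv r i) (rho (zK r i) m) = m"
    using rho_comp[of "zK r i" "zKinv r i" m] rho_comp[of "zKinv r i" "zK r i" m]
    by (simp_all add: zK_zKinv zKinv_zK)
next
  fix i j :: int and m
  assume "1 < \<bar>i - j\<bar>"
  then show "rho (zE r i) (rho (zE r j) m) = rho (zE r j) (rho (zE r i) m)"
    and "rho (zF r i) (rho (zF r j) m) = rho (zF r j) (rho (zF r i) m)"
    by (simp_all add: rho_commute zE_commute zF_commute)
next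
  fix i j :: int and m
  assume ij: "\<bar>i - j\<bar> = 1"
  show "rho (zE r i) (rho (zE r i) (rho (zE r j) m)) - sm (vq + inverse vq) (rho (zE r i) (rho (zE r j) (rho (zE r i) m)))
      + rho (zE r j) (rho (zE r i) (rho (zE r i) m)) = 0"
    by (rule rho_serre[OF _ _ zE_serre[OF ij]]) simp_all
  show "rho (zF r i) (rho (zF r i) (rho (zF r j) m)) - sm (vq + inverse vq) (rho (zF r i) (rho (zF r j) (rho (zF r i) m)))
      + rho (zF r j) (rho (zF r i) (rho (zF r i) m)) = 0"
    by (rule rho_serre[OF _ _ zF_serre[OF ij]]) simp_all
qed (simp_all add: Umodule_vector_space Umodule_linear)

end

section \<open>Weights and nilpotency\<close>

definition Kprod :: "nat \<Rightarrow> (int \<times> K) list \<Rightarrow> top" where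
  "Kprod r ps = foldr (\<lambda>(i, c) A. (\<lambda>x u. zK r i x u + (- c) * restr r id x u) \<circ> A) ps (restr r id)"

lemma Kprod_Nil [simp]: "Kprod r [] = restr r id"
  by (simp add: Kprod_def)

lemma Kprod_Cons [simp]:
  "Kprod r ((i, c) # ps) = (\<lambda>x u. zK r i x u + (- c) * restr r id x u) \<circ> Kprod r ps"
  by (simp add: Kprod_def)

lemma Kprod_Ualg [simp]: "Kprod r ps \<in> Ualg r"
  by (induction ps) auto

lemma Kprod_apply:
  "x \<in> Tsp r \<Longrightarrow> Kprod r ps x u = (\<Prod>(i, c)\<leftarrow>ps. vq powi int (count_list u i) - c) * x u"
proof (induction ps arbitrary: u)
  case (Cons p ps)
  have "Kprod r ps x \<in> Tsp r" using Ualg_Tsp[OF Kprod_Ualg Cons.prems] .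
  with Cons show ?case by (cases p) (simp add: actK_def algebra_simps)
qed simp

lemma Kprod_eq_0:
  assumes "\<And>u. length u = r \<Longrightarrow> \<exists>(i, c)\<in>set ps. vq powi int (count_list u i) = c"
  shows "Kprod r ps = (\<lambda>x u. 0)"
proof (rule Ualg_eqI[where r = r])
  fix x u
  assume x: "x \<in> Tsp r"
  show "Kprod r ps x u = 0"
  proof (cases "x u = 0")
    case False
    then have "length u = r" using Tsp_length[OF x] by blast
    then obtain i c where "(i, c) \<in> set ps" "vq powi int (count_list u i) = c" using assms by blast
    then have "(\<Prod>(i, c)\<leftarrow>ps. vq powi int (count_list u i) - c) = 0"
      by (force simp: prod_list_zero_iff)
    then show ?thesis using x by (simp add: Kprod_apply)
  qed (use x in \<open>simp add: Kprod_apply\<close>)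
qed simp_all

context
  fixes r :: nat and sm :: "K \<Rightarrow> 'm::ab_group_add \<Rightarrow> 'm" and rho :: "top \<Rightarrow> 'm \<Rightarrow> 'm"
  assumes U: "Umodule r sm rho"
begin

lemma rho_Kprod_weight_space:
  assumes m: "m \<in> weight_space sm (\<lambda>i. rho (zK r i)) lam"
  shows "rho (Kprod r ps) m = sm (\<Prod>(i, c)\<leftarrow>ps. vq powi lam i - c) m"
proof (induction ps)
  case Nil
  show ?case using Umodule_vector_space[OF U]
    by (simp add: rho_one[OF U] module_iff_vector_space[symmetric] module.scale_one)
next
  case (Cons p ps)
  obtain i c where p: "p = (i, c)" by fastforce
  let ?P = "\<Prod>(i, c)\<leftarrow>ps. vq powi lam i - c"
  have vs: "module sm" using Umodule_vector_space[OF U] by (simp add: module_iff_vector_space)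
  have K: "rho (zK r i) m = sm (vq powi lam i) m" using m by (simp add: weight_space_def)
  have "rho (Kprod r (p # ps)) m = rho (\<lambda>x u. zK r i x u + (- c) * restr r id x u) (sm ?P m)"
    by (simp add: p rho_comp[OF U] Cons del: comp_apply)
  also have "\<dots> = rho (zK r i) (sm ?P m) - sm c (sm ?P m)"
    by (simp add: rho_diff[OF U] rho_smul[OF U] rho_one[OF U] del: comp_apply)
  also have "rho (zK r i) (sm ?P m) = sm ?P (sm (vq powi lam i) m)"
    using K Umodule_linear[OF U, of "zK r i"]
    by (simp add: module_hom_iff_linear[symmetric] module_hom.scale)
  finally show ?case using vs
    by (simp add: p module.scale_scale module.scale_left_diff_distrib[symmetric] algebra_simps)
qed

lemma weight_root:
  assumes m: "m \<in> weight_space sm (\<lambda>i. rho (zK r i)) lam" and "m \<noteq> 0"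
    and "\<And>u. length u = r \<Longrightarrow> \<exists>(i, c)\<in>set ps. vq powi int (count_list u i) = c"
  shows "\<exists>(i, c)\<in>set ps. vq powi lam i = c"
proof -
  have "sm (\<Prod>(i, c)\<leftarrow>ps. vq powi lam i - c) m = 0"
    using rho_Kprod_weight_space[OF m, of ps] Kprod_eq_0[OF assms(3)] rho_zero[OF U] by simp
  then have "(\<Prod>(i, c)\<leftarrow>ps. vq powi lam i - c) = 0"
    using Umodule_vector_space[OF U] \<open>m \<noteq> 0\<close> by (simp add: vector_space.scale_eq_0_iff)
  then show ?thesis by (force simp: prod_list_zero_iff)
qed

end

lemma Ualg_funpow: "A \<in> Ualg r \<Longrightarrow> n \<noteq> 0 \<Longrightarrow> A ^^ n \<in> Ualg r"
proof (induction n)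
  case (Suc n)
  then show ?case by (cases "n = 0") (simp_all del: comp_apply)
qed simp

lemma actE_funpow_Tsp: "x \<in> Tsp r \<Longrightarrow> (actE a ^^ n) x \<in> Tsp r"
  by (induction n) simp_all

lemma actF_funpow_Tsp: "x \<in> Tsp r \<Longrightarrow> (actF a ^^ n) x \<in> Tsp r"
  by (induction n) simp_all

lemma zE_funpow_apply: "x \<in> Tsp r \<Longrightarrow> (zE r a ^^ n) x = (actE a ^^ n) x"
  by (induction n) (simp_all add: actE_funpow_Tsp)

lemma zF_funpow_apply: "x \<in> Tsp r \<Longrightarrow> (zF r a ^^ n) x = (actF a ^^ n) x"
  by (induction n) (simp_all add: actF_funpow_Tsp)

lemma zE_funpow_eq_0:
  assumes "r < n"
  shows "zE r a ^^ n = (\<lambda>x u. 0)"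
proof (rule Ualg_eqI[where r = r])
  show "zE r a ^^ n \<in> Ualg r" using assms by (simp add: Ualg_funpow)
  fix x u
  assume x: "x \<in> Tsp r"
  show "(zE r a ^^ n) x u = 0"
  proof (cases "length u = r")
    case True
    then have "count_list u a < n" using count_le_length[of u a] assms by simp
    then show ?thesis using x by (simp add: zE_funpow_apply actE_power_vanish)
  next
    case False
    then show ?thesis using x actE_funpow_Tsp Tsp_length by (metis zE_funpow_apply)
  qed
qed simp

lemma zF_funpow_eq_0:
  assumes "r < n"
  shows "zF r a ^^ n = (\<lambda>x u. 0)"
proof (rule Ualg_eqI[where r = r])
  show "zF r a ^^ n \<in> Ualg r" using assms by (simp add: Ualg_funpow)
  fix x u
  assume x: "x \<in> Tsp r"
  show "(zF r a ^^ n) x u = 0"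
  proof (cases "length u = r")
    case True
    then have "count_list u (a + 1) < n" using count_le_length[of u "a + 1"] assms by simp
    then show ?thesis using x by (simp add: zF_funpow_apply actF_power_vanish)
  next
    case False
    then show ?thesis using x actF_funpow_Tsp Tsp_length by (metis zF_funpow_apply)
  qed
qed simp

context
  fixes r :: nat and sm :: "K \<Rightarrow> 'm::ab_group_add \<Rightarrow> 'm" and rho :: "top \<Rightarrow> 'm \<Rightarrow> 'm"
  assumes U: "Umodule r sm rho"
begin

lemma rho_funpow: "A \<in> Ualg r \<Longrightarrow> n \<noteq> 0 \<Longrightarrow> (rho A ^^ n) m = rho (A ^^ n) m"
proof (induction n)
  case (Suc n)
  show ?case
  proof (cases "n = 0")
    case False
    have "(rho A ^^ Suc n) m = rho A (rho (A ^^ n) m)"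
      using Suc False by simp
    also have "\<dots> = rho (A \<circ> A ^^ n) m"
      using Suc.prems Ualg_funpow[OF Suc.prems(1) False] by (simp only: rho_comp[OF U])
    finally show ?thesis by (simp only: funpow.simps(2))
  qed simp
qed simp

lemma Cint_of_Umodule:
  assumes "weight_module sm (\<lambda>i. rho (zK r i))"
  shows "Cint sm (\<lambda>i. rho (zE r i)) (\<lambda>i. rho (zF r i)) (\<lambda>i. rho (zK r i))"
  unfolding Cint_def
proof (intro conjI[OF assms] allI exI[of _ "Suc r"] impI)
  fix m i n
  assume "Suc r \<le> n"
  then show "(rho (zE r i) ^^ n) m = 0 \<and> (rho (zF r i) ^^ n) m = 0"
    by (simp add: rho_funpow zE_funpow_eq_0 zF_funpow_eq_0 rho_zero[OF U])
qed

lemma Cpol_of_Umodule: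
  assumes "weight_module sm (\<lambda>i. rho (zK r i))"
  shows "Cpol sm (\<lambda>i. rho (zK r i))"
  unfolding Cpol_def
proof (intro conjI assms allI impI)
  fix lam
  assume "\<exists>m\<in>weight_space sm (\<lambda>i. rho (zK r i)) lam. m \<noteq> 0"
  then obtain m where m: "m \<in> weight_space sm (\<lambda>i. rho (zK r i)) lam" and "m \<noteq> 0" by blast
  show "0 \<le> lam i" for i
  proof -
    have "\<exists>(j, c)\<in>set (map (\<lambda>k. (i, vq ^ k)) [0..<Suc r]). vq powi int (count_list u j) = c"
      if "length u = r" for u
      using count_le_length[of u i] that by force
    from weight_root[OF U m \<open>m \<noteq> 0\<close> this] obtain k where "vq powi lam i = vq powi int k"
      by auto
    then show "0 \<le> lam i" using vq_powi_inject[of "lam i" "int k"] by simp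
  qed
  show "finite {i. lam i \<noteq> 0}"
  proof (rule ccontr)
    assume "infinite {i. lam i \<noteq> 0}"
    then obtain S where S: "finite S" "card S = Suc r" "S \<subseteq> {i. lam i \<noteq> 0}"
      using infinite_arbitrarily_large by blast
    have "\<exists>(j, c)\<in>set (map (\<lambda>i. (i, 1)) (sorted_list_of_set S)). vq powi int (count_list u j) = c"
      if "length u = r" for u
    proof -
      have "\<not> S \<subseteq> set u"
        using card_mono[of "set u" S] card_length[of u] S(2) that by auto
      then obtain i where "i \<in> S" "i \<notin> set u" by blast
      then show ?thesis using S(1) by force
    qed
    from weight_root[OF U m \<open>m \<noteq> 0\<close> this] obtain j where "j \<in> S" "vq powi lam j = vq powi 0"
      using S(1) by auto
    then show False using S(3) by (auto simp: vq_powi_eq_1_iff)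
  qed
qed

end

lemma Umodule_intertwines_iff_generators:
  fixes smM :: "K \<Rightarrow> 'm::ab_group_add \<Rightarrow> 'm" and smN :: "K \<Rightarrow> 'n::ab_group_add \<Rightarrow> 'n"
  assumes UM: "Umodule r smM rhoM" and UN: "Umodule r smN rhoN" and f: "Vector_Spaces.linear smM smN f"
  shows "(\<forall>A\<in>Ualg r. \<forall>m. f (rhoM A m) = rhoN A (f m)) \<longleftrightarrow>
         (\<forall>i m. f (rhoM (zE r i) m) = rhoN (zE r i) (f m) \<and> f (rhoM (zF r i) m) = rhoN (zF r i) (f m)
              \<and> f (rhoM (zK r i) m) = rhoN (zK r i) (f m) \<and> f (rhoM (zKinv r i) m) = rhoN (zKinv r i) (f m))"
    (is "?all \<longleftrightarrow> ?gen")
proof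
  assume ?gen
  show ?all
  proof
    fix A
    assume "A \<in> Ualg r"
    then show "\<forall>m. f (rhoM A m) = rhoN A (f m)"
    proof induction
      case (add A B)
      with f show ?case
        by (simp add: rho_add[OF UM] rho_add[OF UN] module_hom_iff_linear[symmetric] module_hom.add)
    next
      case (smul A c)
      with f show ?case
        by (simp add: rho_smul[OF UM] rho_smul[OF UN] module_hom_iff_linear[symmetric] module_hom.scale)
    qed (use \<open>?gen\<close> in \<open>simp_all add: rho_one[OF UM] rho_one[OF UN] rho_comp[OF UM] rho_comp[OF UN] del: comp_apply\<close>)
  qed
qed simp

section \<open>The homomorphism U(\<infinity>,r+1) \<rightarrow> U(\<infinity>,r)\<close>

definition tensor_omega :: "tvec \<Rightarrow> int \<Rightarrow> tvec" where
  "tensor_omega y c u = (if u = [] then 0 else if last u = c then y (butlast u) else 0)"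

lemma tensor_omega_snoc [simp]: "tensor_omega y c (u @ [b]) = (if b = c then y u else 0)"
  by (simp add: tensor_omega_def)

lemma tensor_omega_Nil [simp]: "tensor_omega y c [] = 0"
  by (simp add: tensor_omega_def)

lemma tensor_omega_Tsp [simp]:
  assumes y: "y \<in> Tsp r"
  shows "tensor_omega y c \<in> Tsp (Suc r)"
proof -
  have support: "u \<in> (\<lambda>w. w @ [c]) ` {w. y w \<noteq> 0} \<and> length u = Suc r"
    if "tensor_omega y c u \<noteq> 0" for u
    using that Tsp_length[OF y] by (cases u rule: rev_cases) (auto split: if_splits)
  have "finite {u. tensor_omega y c u \<noteq> 0}"
    using Tsp_finite_support[OF y] by (rule finite_surj) (use support in blast)
  then show ?thesis unfolding Tsp_def using support by blast
qed

lemma snoc_ext: "F [] = G [] \<Longrightarrow> (\<And>u b. F (u @ [b]) = G (u @ [b])) \<Longrightarrow> F = G"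
  by (rule ext) (metis rev_exhaust)

lemma actE_tensor_omega: "c \<noteq> a \<Longrightarrow> c \<noteq> a + 1 \<Longrightarrow> actE a (tensor_omega y c) = tensor_omega (actE a y) c"
  by (rule snoc_ext) (auto simp: actE_snoc dK_def)

lemma actF_tensor_omega: "c \<noteq> a \<Longrightarrow> actF a (tensor_omega y c) = tensor_omega (actF a y) c"
  by (rule snoc_ext) (auto simp: actF_snoc)

lemma actK_tensor_omega: "c \<noteq> a \<Longrightarrow> actK a (tensor_omega y c) = tensor_omega (actK a y) c"
  by (rule snoc_ext) (auto simp: actK_def)

lemma actKinv_tensor_omega: "c \<noteq> a \<Longrightarrow> actKinv a (tensor_omega y c) = tensor_omega (actKinv a y) c"
  by (rule snoc_ext) (auto simp: actKinv_def)

text \<open>restricts_to r A A': for every c beyond some bound (larger than all indices occurring in A),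
  A acts on y \<otimes> \<omega>_c as A' y \<otimes> \<omega>_c.\<close>

definition restricts_to :: "nat \<Rightarrow> top \<Rightarrow> top \<Rightarrow> bool" where
  "restricts_to r A A' \<longleftrightarrow> A' \<in> Ualg r \<and>
     (\<forall>\<^sub>F c in at_top. \<forall>y\<in>Tsp r. A (tensor_omega y c) = tensor_omega (A' y) c)"

lemma restricts_to_one: "restricts_to r (restr (Suc r) id) (restr r id)"
  by (simp add: restricts_to_def)

lemma restricts_to_zE: "restricts_to r (zE (Suc r) a) (zE r a)"
  unfolding restricts_to_def
  by (auto intro!: eventually_at_top_linorderI[of "a + 2"] simp: actE_tensor_omega)

lemma restricts_to_zF: "restricts_to r (zF (Suc r) a) (zF r a)"
  unfolding restricts_to_def
  by (auto intro!: eventually_at_top_linorderI[of "a + 1"] simp: actF_tensor_omega)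

lemma restricts_to_zK: "restricts_to r (zK (Suc r) a) (zK r a)"
  unfolding restricts_to_def
  by (auto intro!: eventually_at_top_linorderI[of "a + 1"] simp: actK_tensor_omega)

lemma restricts_to_zKinv: "restricts_to r (zKinv (Suc r) a) (zKinv r a)"
  unfolding restricts_to_def
  by (auto intro!: eventually_at_top_linorderI[of "a + 1"] simp: actKinv_tensor_omega)

lemma restricts_to_add:
  assumes "restricts_to r A A'" "restricts_to r B B'"
  shows "restricts_to r (\<lambda>x u. A x u + B x u) (\<lambda>x u. A' x u + B' x u)"
proof -
  have "\<forall>\<^sub>F c in at_top. (\<forall>y\<in>Tsp r. A (tensor_omega y c) = tensor_omega (A' y) c)
      \<and> (\<forall>y\<in>Tsp r. B (tensor_omega y c) = tensor_omega (B' y) c)"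
    using assms unfolding restricts_to_def by (simp add: eventually_conj_iff)
  then have "\<forall>\<^sub>F c in at_top. \<forall>y\<in>Tsp r.
      (\<lambda>u. A (tensor_omega y c) u + B (tensor_omega y c) u) = tensor_omega (\<lambda>u. A' y u + B' y u) c"
    by (rule eventually_mono) (simp add: snoc_ext)
  with assms show ?thesis unfolding restricts_to_def by simp
qed

lemma restricts_to_smul:
  assumes "restricts_to r A A'"
  shows "restricts_to r (\<lambda>x u. c * A x u) (\<lambda>x u. c * A' x u)"
proof -
  have "\<forall>\<^sub>F d in at_top. \<forall>y\<in>Tsp r. (\<lambda>u. c * A (tensor_omega y d) u) = tensor_omega (\<lambda>u. c * A' y u) d"
    using assms unfolding restricts_to_def by (rule conjE) (erule eventually_mono, simp add: snoc_ext)
  with assms show ?thesis unfolding restricts_to_def by simp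
qed

lemma restricts_to_comp:
  assumes "restricts_to r A A'" "restricts_to r B B'"
  shows "restricts_to r (A \<circ> B) (A' \<circ> B')"
proof -
  have B': "B' \<in> Ualg r" using assms(2) unfolding restricts_to_def by blast
  have "\<forall>\<^sub>F c in at_top. (\<forall>y\<in>Tsp r. A (tensor_omega y c) = tensor_omega (A' y) c)
      \<and> (\<forall>y\<in>Tsp r. B (tensor_omega y c) = tensor_omega (B' y) c)"
    using assms unfolding restricts_to_def by (simp add: eventually_conj_iff)
  then have "\<forall>\<^sub>F c in at_top. \<forall>y\<in>Tsp r. A (B (tensor_omega y c)) = tensor_omega (A' (B' y)) c"
    by (rule eventually_mono) (simp add: Ualg_Tsp[OF B'])
  with assms show ?thesis unfolding restricts_to_def by simp
qed

lemma restricts_to_exists: "A \<in> Ualg (Suc r) \<Longrightarrow> \<exists>A'. restricts_to r A A'"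
proof (induction rule: Ualg.induct)
  case one then show ?case using restricts_to_one by blast
next
  case (genE a) then show ?case using restricts_to_zE by blast
next
  case (genF a) then show ?case using restricts_to_zF by blast
next
  case (genK a) then show ?case using restricts_to_zK by blast
next
  case (genKinv a) then show ?case using restricts_to_zKinv by blast
next
  case (add A B) then show ?case using restricts_to_add by blast
next
  case (smul A c) then show ?case using restricts_to_smul by blast
next
  case (comp A B) then show ?case using restricts_to_comp by blast
qed

lemma restricts_to_unique:
  assumes "restricts_to r A A1" "restricts_to r A A2"
  shows "A1 = A2"
proof -
  have "\<forall>\<^sub>F c in at_top. (\<forall>y\<in>Tsp r. A (tensor_omega y c) = tensor_omega (A1 y) c)
      \<and> (\<forall>y\<in>Tsp r. A (tensor_omega y c) = tensor_omega (A2 y) c)"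
    using assms unfolding restricts_to_def by (simp add: eventually_conj_iff)
  then have "\<forall>\<^sub>F c in at_top. \<forall>y\<in>Tsp r. tensor_omega (A1 y) c = tensor_omega (A2 y) c"
    by (rule eventually_mono) auto
  then obtain c where c: "\<forall>y\<in>Tsp r. tensor_omega (A1 y) c = tensor_omega (A2 y) c"
    using eventually_happens'[OF trivial_limit_at_top_linorder] by blast
  show ?thesis
  proof (rule Ualg_eqI[where r = r])
    show "A1 \<in> Ualg r" "A2 \<in> Ualg r" using assms unfolding restricts_to_def by blast+
    fix x u
    assume "x \<in> Tsp r"
    then show "A1 x u = A2 x u"
      using fun_cong[OF c[rule_format], of x "u @ [c]"] by simp
  qed
qed

definition Uproj :: "nat \<Rightarrow> top \<Rightarrow> top" where
  "Uproj r A = (SOME A'. restricts_to r A A')"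

lemma Uproj_restricts_to: "A \<in> Ualg (Suc r) \<Longrightarrow> restricts_to r A (Uproj r A)"
  unfolding Uproj_def using restricts_to_exists by (metis someI_ex)

lemma Uproj_eqI: "A \<in> Ualg (Suc r) \<Longrightarrow> restricts_to r A A' \<Longrightarrow> Uproj r A = A'"
  using Uproj_restricts_to restricts_to_unique by blast

lemma Uproj_Ualg: "A \<in> Ualg (Suc r) \<Longrightarrow> Uproj r A \<in> Ualg r"
  using Uproj_restricts_to unfolding restricts_to_def by blast

lemma Uproj_one: "Uproj r (restr (Suc r) id) = restr r id"
  by (rule Uproj_eqI[OF Ualg.one restricts_to_one])

lemma Uproj_zE: "Uproj r (zE (Suc r) i) = zE r i"
  by (rule Uproj_eqI[OF Ualg.genE restricts_to_zE])

lemma Uproj_zF: "Uproj r (zF (Suc r) i) = zF r i"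
  by (rule Uproj_eqI[OF Ualg.genF restricts_to_zF])

lemma Uproj_zK: "Uproj r (zK (Suc r) i) = zK r i"
  by (rule Uproj_eqI[OF Ualg.genK restricts_to_zK])

lemma Uproj_zKinv: "Uproj r (zKinv (Suc r) i) = zKinv r i"
  by (rule Uproj_eqI[OF Ualg.genKinv restricts_to_zKinv])

lemma Uproj_add:
  "A \<in> Ualg (Suc r) \<Longrightarrow> B \<in> Ualg (Suc r) \<Longrightarrow>
     Uproj r (\<lambda>x u. A x u + B x u) = (\<lambda>x u. Uproj r A x u + Uproj r B x u)"
  by (rule Uproj_eqI[OF Ualg.add restricts_to_add[OF Uproj_restricts_to Uproj_restricts_to]])

lemma Uproj_smul: "A \<in> Ualg (Suc r) \<Longrightarrow> Uproj r (\<lambda>x u. c * A x u) = (\<lambda>x u. c * Uproj r A x u)"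
  by (rule Uproj_eqI[OF Ualg.smul restricts_to_smul[OF Uproj_restricts_to]])

lemma Uproj_comp:
  "A \<in> Ualg (Suc r) \<Longrightarrow> B \<in> Ualg (Suc r) \<Longrightarrow> Uproj r (A \<circ> B) = Uproj r A \<circ> Uproj r B"
  by (rule Uproj_eqI[OF Ualg.comp restricts_to_comp[OF Uproj_restricts_to Uproj_restricts_to]])

lemma Uproj_surj: "A' \<in> Ualg r \<Longrightarrow> \<exists>A\<in>Ualg (Suc r). Uproj r A = A'"
proof (induction rule: Ualg.induct)
  case one then show ?case using Uproj_one Ualg.one by blast
next
  case (genE a) then show ?case using Uproj_zE Ualg.genE by blast
next
  case (genF a) then show ?case using Uproj_zF Ualg.genF by blast
next
  case (genK a) then show ?case using Uproj_zK Ualg.genK by blast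
next
  case (genKinv a) then show ?case using Uproj_zKinv Ualg.genKinv by blast
next
  case (add A' B')
  then obtain A B where "A \<in> Ualg (Suc r)" "B \<in> Ualg (Suc r)" "Uproj r A = A'" "Uproj r B = B'" by blast
  then show ?case using Uproj_add Ualg.add by blast
next
  case (smul A' c)
  then obtain A where "A \<in> Ualg (Suc r)" "Uproj r A = A'" by blast
  then show ?case using Uproj_smul Ualg.smul by blast
next
  case (comp A' B')
  then obtain A B where "A \<in> Ualg (Suc r)" "B \<in> Ualg (Suc r)" "Uproj r A = A'" "Uproj r B = B'" by blast
  then show ?case using Uproj_comp Ualg.comp by blast
qed

lemma Uhom_Uproj: "Uhom r (Uproj r)"
  unfolding Uhom_def
proof (intro conjI ballI allI)
  show "Uproj r ` Ualg (Suc r) = Ualg r"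
    using Uproj_Ualg Uproj_surj by blast
qed (simp_all add: Uproj_one Uproj_add Uproj_smul Uproj_comp Uproj_zE Uproj_zF Uproj_zK)

lemma Umodule_comp_Uhom:
  assumes H: "Uhom r phi" and U: "Umodule r sm rho"
  shows "Umodule (Suc r) sm (rho \<circ> phi)"
proof -
  have phi_Ualg: "A \<in> Ualg (Suc r) \<Longrightarrow> phi A \<in> Ualg r" for A
    using H unfolding Uhom_def by blast
  have phi_one: "phi (restr (Suc r) id) = restr r id"
    and phi_add: "\<And>A B. A \<in> Ualg (Suc r) \<Longrightarrow> B \<in> Ualg (Suc r) \<Longrightarrow>
        phi (\<lambda>x u. A x u + B x u) = (\<lambda>x u. phi A x u + phi B x u)"
    and phi_smul: "\<And>c A. A \<in> Ualg (Suc r) \<Longrightarrow> phi (\<lambda>x u. c * A x u) = (\<lambda>x u. c * phi A x u)"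
    and phi_comp: "\<And>A B. A \<in> Ualg (Suc r) \<Longrightarrow> B \<in> Ualg (Suc r) \<Longrightarrow> phi (A \<circ> B) = phi A \<circ> phi B"
    using H unfolding Uhom_def by blast+
  show ?thesis
    unfolding Umodule_def
    using Umodule_vector_space[OF U] Umodule_linear[OF U] phi_Ualg rho_one[OF U]
      rho_add[OF U] rho_smul[OF U] rho_comp[OF U]
    by (simp add: fun_eq_iff phi_one phi_add phi_smul phi_comp)
qed

lemma Cobj_comp_Uhom: "Uhom r phi \<Longrightarrow> Cobj r sm rho \<Longrightarrow> Cobj (Suc r) sm (rho \<circ> phi)"
  unfolding Cobj_def using Umodule_comp_Uhom by (auto simp: Uhom_def)

lemma intertwines_Uhom_iff:
  assumes "Uhom r phi"
  shows "(\<forall>B\<in>Ualg (Suc r). \<forall>m. f (rhoM (phi B) m) = rhoN (phi B) (f m)) \<longleftrightarrow>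
    (\<forall>A\<in>Ualg r. \<forall>m. f (rhoM A m) = rhoN A (f m))"
proof -
  have "Ualg r = phi ` Ualg (Suc r)" using assms unfolding Uhom_def by simp
  then show ?thesis by simp
qed

lemma Cobj_intertwines_iff_generators:
  fixes smM :: "K \<Rightarrow> 'm::ab_group_add \<Rightarrow> 'm" and smN :: "K \<Rightarrow> 'n::ab_group_add \<Rightarrow> 'n"
  assumes "Cobj r smM rhoM" "Cobj r smN rhoN" "Vector_Spaces.linear smM smN f"
  shows "(\<forall>A\<in>Ualg r. \<forall>m. f (rhoM A m) = rhoN A (f m)) \<longleftrightarrow>
         (\<forall>i m. f (rhoM (zE r i) m) = rhoN (zE r i) (f m) \<and> f (rhoM (zF r i) m) = rhoN (zF r i) (f m)
              \<and> f (rhoM (zK r i) m) = rhoN (zK r i) (f m) \<and> f (rhoM (zKinv r i) m) = rhoN (zKinv r i) (f m))"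
proof -
  from assms(1,2) have "Umodule r smM rhoM" "Umodule r smN rhoN"
    unfolding Cobj_def by blast+
  then show ?thesis using assms(3) by (rule Umodule_intertwines_iff_generators)
qed

lemma Cobj_Uinf_module_Cpol_Cint:
  assumes "Cobj r sm rho"
  shows "Uinf_module sm (\<lambda>i. rho (zE r i)) (\<lambda>i. rho (zF r i)) (\<lambda>i. rho (zK r i)) (\<lambda>i. rho (zKinv r i))
    \<and> Cpol sm (\<lambda>i. rho (zK r i)) \<and> Cint sm (\<lambda>i. rho (zE r i)) (\<lambda>i. rho (zF r i)) (\<lambda>i. rho (zK r i))"
  using assms Uinf_module_of_Umodule Cpol_of_Umodule Cint_of_Umodule unfolding Cobj_def by blast

theorem proposition11p1:
  fixes smM :: "K \<Rightarrow> 'm::ab_group_add \<Rightarrow> 'm" and smN :: "K \<Rightarrow> 'n::ab_group_add \<Rightarrow> 'n"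
  shows
   "(\<forall>r rhoM. Cobj r smM rhoM \<longrightarrow>
        Uinf_module smM (\<lambda>i. rhoM (zE r i)) (\<lambda>i. rhoM (zF r i)) (\<lambda>i. rhoM (zK r i)) (\<lambda>i. rhoM (zKinv r i))
      \<and> Cpol smM (\<lambda>i. rhoM (zK r i))
      \<and> Cint smM (\<lambda>i. rhoM (zE r i)) (\<lambda>i. rhoM (zF r i)) (\<lambda>i. rhoM (zK r i)))
    \<and> (\<forall>r rhoM rhoN f. Cobj r smM rhoM \<and> Cobj r smN rhoN \<and> Vector_Spaces.linear smM smN f \<longrightarrow>
        ((\<forall>A\<in>Ualg r. \<forall>m. f (rhoM A m) = rhoN A (f m)) \<longleftrightarrow>
         (\<forall>i m. f (rhoM (zE r i) m) = rhoN (zE r i) (f m) \<and> f (rhoM (zF r i) m) = rhoN (zF r i) (f m)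
              \<and> f (rhoM (zK r i) m) = rhoN (zK r i) (f m) \<and> f (rhoM (zKinv r i) m) = rhoN (zKinv r i) (f m))))
    \<and> (\<forall>r. (\<exists>phi. Uhom r phi)
        \<and> (\<forall>phi. Uhom r phi \<longrightarrow>
             (\<forall>rhoM. Cobj r smM rhoM \<longrightarrow> Cobj (Suc r) smM (rhoM \<circ> phi))
           \<and> (\<forall>rhoM rhoN f. Cobj r smM rhoM \<and> Cobj r smN rhoN \<and> Vector_Spaces.linear smM smN f \<longrightarrow>
                ((\<forall>A\<in>Ualg r. \<forall>m. f (rhoM A m) = rhoN A (f m)) \<longleftrightarrow>
                 (\<forall>B\<in>Ualg (Suc r). \<forall>m. f ((rhoM \<circ> phi) B m) = (rhoN \<circ> phi) B (f m))))))"
proof (intro conjI allI impI; (elim conjE)?)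
  show "\<exists>phi. Uhom r phi" for r
    using Uhom_Uproj by blast
qed (simp_all add: Cobj_Uinf_module_Cpol_Cint Cobj_comp_Uhom Cobj_intertwines_iff_generators
       intertwines_Uhom_iff)

end
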